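(* The oriented submanifold $V_{1,2}\subset Q_2^*$ consists of a single point, and this point is positively oriented.
   Context: Let $G=Sp(1)$ (unit quaternions, a $3$-sphere, with a fixed orientation), $G'=G/\{\pm1\}=SO(3)$ with the induced orientation. For $n\ge2$ let $P_n=G^n$ (product orientation) with the right $G'$-action induced by $g$ acting by conjugation by $g^{-1}$ in each factor; $P_n^*$ is the open set of points with trivial $G'$-stabilizer and $Q_n^*=P_n^*/G'$, with $\pi:P_n^*\to Q_n^*$ a principal $G'$-bundle. Orientation conventions: for an oriented submanifold $Z\subset W$ the normal bundle is oriented so that $TW|_Z=NZ\oplus TZ$ preserves orientation; for $f:V\to W$ transverse to $Z$, $f^{-1}(Z)$ is oriented so that $N(f^{-1}Z)\to f^*NZ$ preserves orientation; for a fibre bundle $P\to V$ with oriented total space, a fibre $F$ is oriented so that $TP|_F=TF\oplus\pi^*TV|_F$ preserves orientation. $Q_n^*$ is oriented so that, with fibres oriented by $G'$, these conventions hold for $\pi$. Let $G$ act on $G$ on the left by conjugation (descending to $G'$), and let $E_{1,n}=P_n^*\times_{G'}G\to Q_n^*$, with fibres oriented from $G$ and total space oriented by the fibre convention. Let $-\mathbf 1\subset E_{1,n}$ be the image of the section given by the fixed point $-1\in G$. For $1\le p<q\le n$, the equivariant map $P_n\to G$, $(g_1,\dots,g_n)\mapsto[g_p,g_q]=g_pg_qg_p^{-1}g_q^{-1}$, defines a section $\zeta_{p,q}$ of $E_{1,n}$, which is transverse to $-\mathbf1$; $V_{p,q}:=\zeta_{p,q}^{-1}(-\mathbf 1)\subset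 Q_n^*$ with the induced orientation. *)

theory Defs
  imports "HOL-Analysis.Analysis"
begin

text \<open>Quaternions H = C + C j (Cayley-Dickson), realised on the Euclidean space complex \<times> complex.
  The pair (a,b) stands for a + b j; so i = (\<i>,0), j = (0,1), k = ij = (0,\<i>).\<close>

type_synonym quat = "complex \<times> complex"

definition qmult :: "quat \<Rightarrow> quat \<Rightarrow> quat" where
  "qmult p q = (fst p * fst q - cnj (snd q) * snd p, snd q * fst p + snd p * cnj (fst q))"

definition qcnj :: "quat \<Rightarrow> quat" where
  "qcnj q = (cnj (fst q), - snd q)"

definition qone :: quat where "qone = (1, 0)"
definition qi :: quat where "qi = (\<i>, 0)"
definition qj :: quat where "qj = (0, 1)"
definition qk :: quat where "qk = (0, \<i>)"

text \<open>G = Sp(1), the unit quaternions (inverse = conjugate on G).\<close>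
definition Sp1 :: "quat set" where "Sp1 = {q. norm q = 1}"

text \<open>P_2 = G^2 and the right action: g acts by conjugation by g^{-1} in each factor.\<close>
definition P2 :: "(quat \<times> quat) set" where "P2 = Sp1 \<times> Sp1"

definition act :: "quat \<times> quat \<Rightarrow> quat \<Rightarrow> quat \<times> quat" where
  "act x g = (qmult (qcnj g) (qmult (fst x) g), qmult (qcnj g) (qmult (snd x) g))"

text \<open>Trivial G' = G/{\<plusminus>1} stabilizer: the G-stabilizer is contained in {1,-1}.\<close>
definition P2star :: "(quat \<times> quat) set" where
  "P2star = {x \<in> P2. {g \<in> Sp1. act x g = x} \<subseteq> {qone, - qone}}"

definition orbit :: "quat \<times> quat \<Rightarrow> (quat \<times> quat) set" where
  "orbit x = (\<lambda>g. act x g) ` Sp1"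

text \<open>Q_2^* = P_2^*/G', points being G'-orbits.\<close>
definition Q2star :: "(quat \<times> quat) set set" where
  "Q2star = orbit ` P2star"

text \<open>The commutator map [g_1,g_2] = g_1 g_2 g_1^{-1} g_2^{-1} (inverse = conjugate on G;
  this polynomial formula is a smooth extension to all of H^2).\<close>
definition comm :: "quat \<times> quat \<Rightarrow> quat" where
  "comm x = qmult (qmult (fst x) (snd x)) (qmult (qcnj (fst x)) (qcnj (snd x)))"

definition V12 :: "(quat \<times> quat) set set" where
  "V12 = {orbit x | x. x \<in> P2star \<and> comm x = - qone}"

definition TG :: "quat \<Rightarrow> quat set" where "TG g = {v. inner g v = 0}"
definition TP :: "quat \<times> quat \<Rightarrow> (quat \<times> quat) set" where
  "TP x = TG (fst x) \<times> TG (snd x)"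

text \<open>Orientation of G: the basis (g i, g j, g k) of T_g G is positive (the left translate of
  (i,j,k) at 1).  Coordinates of v \<in> T_g G with respect to that basis:\<close>
definition gcoord :: "quat \<Rightarrow> quat \<Rightarrow> nat \<Rightarrow> real" where
  "gcoord g v l = (let w = qmult (qcnj g) v in
     if l = 0 then Im (fst w) else if l = 1 then Re (snd w) else Im (snd w))"

text \<open>Product orientation on P_2: coordinates 0,1,2 from the first factor, 3,4,5 from the second.\<close>
definition Pcoord :: "quat \<times> quat \<Rightarrow> quat \<times> quat \<Rightarrow> nat \<Rightarrow> real" where
  "Pcoord x v l = (if l < 3 then gcoord (fst x) (fst v) l else gcoord (snd x) (snd v) (l - 3))"

definition ebasis :: "nat \<Rightarrow> quat" where
  "ebasis l = (if l = 0 then qi else if l = 1 then qj else qk)"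

text \<open>Fundamental vector field of the G'-action at x for \<xi> \<in> T_1 G = Im H:
  d/dt (exp(-t xi) g exp(t xi)) at t = 0, in each factor.  The fibre through x is oriented
  by the images of the positive basis (i,j,k) of T_1 G.\<close>
definition fibvec :: "quat \<times> quat \<Rightarrow> quat \<Rightarrow> quat \<times> quat" where
  "fibvec x \<xi> = (qmult (fst x) \<xi> - qmult \<xi> (fst x), qmult (snd x) \<xi> - qmult \<xi> (snd x))"

definition det_n :: "nat \<Rightarrow> (nat \<Rightarrow> nat \<Rightarrow> real) \<Rightarrow> real" where
  "det_n n M = (\<Sum>p | p permutes {..<n}. of_int (sign p) * (\<Prod>i<n. M i (p i)))"

text \<open>The point [x] of V_{1,2} (x \<in> P_2^*, [x_1,x_2] = -1) is positively oriented:
  for every triple h of tangent vectors at x such that (fibre basis, h) is a positive basis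
  of T_x P_2 (so that h projects to a positive basis of T_[x] Q_2^*), the images
  d[.,.](h) form a positive basis of T_{-1} G (the fibre of E_{1,2} at -1, which by the
  conventions orients the normal bundle of the section -1).\<close>
definition pos_oriented_pt :: "quat \<times> quat \<Rightarrow> bool" where
  "pos_oriented_pt x \<longleftrightarrow>
     (\<forall>h :: nat \<Rightarrow> quat \<times> quat. (\<forall>l<3. h l \<in> TP x) \<longrightarrow>
        det_n 6 (\<lambda>r c. Pcoord x (if c < 3 then fibvec x (ebasis c) else h (c - 3)) r) > 0 \<longrightarrow>
        det_n 3 (\<lambda>r c. gcoord (- qone) (frechet_derivative comm (at x) (h c)) r) > 0)"

end

theory Submission
  imports Defs Jordan_Normal_Form.Determinant
begin

(* The solutions of [a, b] = -1 in Sp(1) x Sp(1) are exactly the pairs of anticommuting unit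
   quaternions, i.e. orthonormal pairs of pure imaginary units; every such pair is conjugate to
   the base point (i, j), whose stabiliser is {1, -1}.  Hence V_{1,2} is the single orbit of
   (i, j), and (i, j) lies in P_2^*.

   For the orientation, the condition at a point x is a sign condition relating two
   determinants: that of a frame of T_x P_2 (fibre basis followed by three tangent vectors h)
   and that of the image of h under d[.,.].  Both determinants are invariant under conjugation
   (the coordinate changes are rotation matrices of determinant 1), so it suffices to check
   (i, j), where an explicit computation shows that both equal -8 times one and the same 3 x 3
   minor of h. *)

section \<open>Quaternion algebra\<close>

lemma norm_quat_sq:
  "(norm (q::quat))\<^sup>2 = (Re (fst q))\<^sup>2 + (Im (fst q))\<^sup>2 + (Re (snd q))\<^sup>2 + (Im (snd q))\<^sup>2"
  by (cases q) (simp add: norm_Pair cmod_power2 add.assoc)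

lemma norm_qmult: "norm (qmult p q) = norm p * norm q"
proof (rule power2_eq_imp_eq)
  have "(norm (qmult p q))\<^sup>2 = (norm p)\<^sup>2 * (norm q)\<^sup>2"
    unfolding norm_quat_sq by (cases p; cases q) (simp add: qmult_def power2_eq_square algebra_simps)
  then show "(norm (qmult p q))\<^sup>2 = (norm p * norm q)\<^sup>2"
    by (simp add: power_mult_distrib)
qed auto

text \<open>Quaternion multiplication is a bounded bilinear map; this gives all distributivity laws
  and, later, the derivative of the commutator map.\<close>
interpretation qmult: bounded_bilinear qmult
proof
  show "qmult (a + a') b = qmult a b + qmult a' b" for a a' b
    by (simp add: qmult_def algebra_simps)
  show "qmult a (b + b') = qmult a b + qmult a b'" for a b b'
    by (simp add: qmult_def algebra_simps)
  show "qmult (r *\<^sub>R a) b = r *\<^sub>R qmult a b" for r a b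
    by (simp add: qmult_def scaleR_conv_of_real algebra_simps)
  show "qmult a (r *\<^sub>R b) = r *\<^sub>R qmult a b" for r a b
    by (simp add: qmult_def scaleR_conv_of_real algebra_simps)
  show "\<exists>K. \<forall>a b. norm (qmult a b) \<le> norm a * norm b * K"
    by (rule exI[of _ 1]) (simp add: norm_qmult)
qed

lemma qmult_assoc: "qmult (qmult p q) r = qmult p (qmult q r)"
  by (simp add: qmult_def algebra_simps)

lemma qmult_qone [simp]: "qmult qone q = q" "qmult q qone = q"
  by (simp_all add: qmult_def qone_def)

lemma qcnj_add: "qcnj (p + q) = qcnj p + qcnj q"
  and qcnj_scaleR: "qcnj (c *\<^sub>R p) = c *\<^sub>R qcnj p"
  and qcnj_qcnj [simp]: "qcnj (qcnj p) = p"
  by (simp_all add: qcnj_def scaleR_conv_of_real)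

lemma norm_qcnj [simp]: "norm (qcnj p) = norm p"
  by (cases p) (simp add: qcnj_def norm_Pair)

lemma bounded_linear_qcnj: "bounded_linear qcnj"
  by (rule bounded_linear_intro[of _ 1]) (simp_all add: qcnj_add qcnj_scaleR)

lemma qcnj_qmult: "qcnj (qmult p q) = qmult (qcnj q) (qcnj p)"
  by (simp add: qmult_def qcnj_def algebra_simps)

lemma unit_qcnj_qmult: "norm q = 1 \<Longrightarrow> qmult (qcnj q) q = qone"
  and unit_qmult_qcnj: "norm q = 1 \<Longrightarrow> qmult q (qcnj q) = qone"
  using norm_quat_sq[of q]
  by (cases q; simp add: qmult_def qcnj_def qone_def complex_eq_iff power2_eq_square algebra_simps)+

lemma unit_cancel: "norm g = 1 \<Longrightarrow> qmult g (qmult (qcnj g) x) = x"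
  and unit_cancel': "norm g = 1 \<Longrightarrow> qmult (qcnj g) (qmult g x) = x"
  by (simp_all add: qmult_assoc[symmetric] unit_qmult_qcnj unit_qcnj_qmult)

lemma inner_quat: "inner a v = Re (fst (qmult (qcnj a) v))"
  by (simp add: qmult_def qcnj_def inner_prod_def inner_complex_def algebra_simps)

lemma qmult_basis:
  "qmult qi qi = - qone" "qmult qj qj = - qone" "qmult qk qk = - qone"
  "qmult qi qj = qk" "qmult qj qi = - qk" "qmult qj qk = qi" "qmult qk qj = - qi"
  "qmult qk qi = qj" "qmult qi qk = - qj"
  by (simp_all add: qmult_def qi_def qj_def qk_def qone_def)

section \<open>The conjugation action\<close>

definition qconj :: "quat \<Rightarrow> quat \<Rightarrow> quat" where
  "qconj g v = qmult (qcnj g) (qmult v g)"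

definition qconj2 :: "quat \<Rightarrow> quat \<times> quat \<Rightarrow> quat \<times> quat" where
  "qconj2 g x = (qconj g (fst x), qconj g (snd x))"

lemma act_eq_qconj2: "act x g = qconj2 g x"
  by (simp add: act_def qconj2_def qconj_def)

lemma qconj_add: "qconj g (p + q) = qconj g p + qconj g q"
  and qconj_diff: "qconj g (p - q) = qconj g p - qconj g q"
  by (simp_all add: qconj_def qmult.add_left qmult.add_right qmult.diff_left qmult.diff_right)

lemma qconj_qcnj: "qcnj (qconj g p) = qconj g (qcnj p)"
  by (simp add: qconj_def qcnj_qmult qmult_assoc)

lemma qconj_qmult: "norm g = 1 \<Longrightarrow> qconj g (qmult p q) = qmult (qconj g p) (qconj g q)"
  by (simp add: qconj_def qmult_assoc unit_cancel)

lemma qconj_inverse: "norm g = 1 \<Longrightarrow> qconj g (qconj (qcnj g) v) = v"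
  by (simp add: qconj_def qmult_assoc unit_cancel' unit_qcnj_qmult)

lemma qconj_compose: "qconj k (qconj g v) = qconj (qmult g k) v"
  by (simp add: qconj_def qcnj_qmult qmult_assoc)

text \<open>Conjugation preserves real parts, hence (being an automorphism) the inner product.\<close>
lemma Re_qconj:
  assumes "norm g = 1" shows "Re (fst (qconj g w)) = Re (fst w)"
proof -
  have "Re (fst (qconj g w)) = (norm g)\<^sup>2 * Re (fst w)"
    unfolding norm_quat_sq
    by (cases g; cases w) (simp add: qconj_def qmult_def qcnj_def power2_eq_square algebra_simps)
  then show ?thesis using assms by simp
qed

lemma inner_qconj: "norm g = 1 \<Longrightarrow> inner (qconj g a) (qconj g v) = inner a v"
  by (simp add: inner_quat qconj_qcnj qconj_qmult[symmetric] Re_qconj)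

lemma orbit_qconj2: "orbit x = (\<lambda>g. qconj2 g x) ` Sp1"
  by (simp add: orbit_def act_eq_qconj2)

lemma orbit_of_qconj2:
  assumes g: "g \<in> Sp1" shows "orbit (qconj2 g x) = orbit x"
proof -
  have ng: "norm g = 1" using g by (simp add: Sp1_def)
  have comp: "qconj2 k (qconj2 g x) = qconj2 (qmult g k) x" for k
    by (simp add: qconj2_def qconj_compose)
  show ?thesis unfolding orbit_qconj2
  proof (intro equalityI subsetI)
    fix z assume "z \<in> (\<lambda>k. qconj2 k (qconj2 g x)) ` Sp1"
    then obtain k where k: "k \<in> Sp1" "z = qconj2 (qmult g k) x" by (auto simp: comp)
    moreover have "qmult g k \<in> Sp1" using k ng by (simp add: Sp1_def norm_qmult)
    ultimately show "z \<in> (\<lambda>g. qconj2 g x) ` Sp1" by blast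
  next
    fix z assume "z \<in> (\<lambda>g. qconj2 g x) ` Sp1"
    then obtain k where k: "k \<in> Sp1" "z = qconj2 k x" by blast
    then have "z = qconj2 (qmult (qcnj g) k) (qconj2 g x)" using ng by (simp add: comp unit_cancel)
    moreover have "qmult (qcnj g) k \<in> Sp1" using k ng by (simp add: Sp1_def norm_qmult)
    ultimately show "z \<in> (\<lambda>k. qconj2 k (qconj2 g x)) ` Sp1" by blast
  qed
qed

section \<open>The rotation matrix of a unit quaternion\<close>

definition im_coord :: "quat \<Rightarrow> nat \<Rightarrow> real" where
  "im_coord w l = (if l = 0 then Im (fst w) else if l = 1 then Re (snd w) else Im (snd w))"

lemma gcoord_im_coord: "gcoord g v l = im_coord (qmult (qcnj g) v) l"
  by (simp add: gcoord_def im_coord_def Let_def)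

lemma gcoord_minus_one: "gcoord (- qone) w l = - im_coord w l"
  by (simp add: gcoord_im_coord qcnj_def qone_def qmult_def im_coord_def)

definition rot_mat :: "quat \<Rightarrow> nat \<Rightarrow> nat \<Rightarrow> real" where
  "rot_mat g l k = im_coord (qconj g (ebasis k)) l"

lemma sum_lessThan_3: "(\<Sum>k<3. f k) = f (0::nat) + f 1 + (f 2 :: 'a::comm_monoid_add)"
  by (simp add: numeral_3_eq_3 numeral_2_eq_2 add.commute add.left_commute)

lemma sum_lessThan_6:
  "(\<Sum>k<6. f k) = f (0::nat) + f 1 + f 2 + f 3 + f 4 + (f 5 :: 'a::comm_monoid_add)"
  by (simp add: eval_nat_numeral add.commute add.left_commute)

lemma im_coord_qconj: "im_coord (qconj g w) l = (\<Sum>k<3. rot_mat g l k * im_coord w k)"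
  by (simp add: sum_lessThan_3 rot_mat_def im_coord_def qconj_def qmult_def qcnj_def ebasis_def
      qi_def qj_def qk_def algebra_simps)

text \<open>The inverse rotation has the transposed matrix.\<close>
lemma qconj_qcnj_ebasis: "qconj (qcnj g) (ebasis c) = (\<Sum>t<3. rot_mat g c t *\<^sub>R ebasis t)"
  by (simp add: sum_lessThan_3 rot_mat_def im_coord_def qconj_def qmult_def qcnj_def ebasis_def
      qi_def qj_def qk_def algebra_simps complex_eq_iff)

section \<open>Determinants of small matrices\<close>

text \<open>The Leibniz determinant det_n is the determinant of Jordan_Normal_Form, whose
  library of row operations and block formulas we use.\<close>
lemma det_n_eq_det: "det_n n M = det (mat n n (\<lambda>(i, j). M i j))"
  unfolding det_n_def det_def by (simp add: atLeast0LessThan)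

lemma det_n_cong: "(\<And>r c. r < n \<Longrightarrow> c < n \<Longrightarrow> M r c = M' r c) \<Longrightarrow> det_n n M = det_n n M'"
  unfolding det_n_eq_det by (intro arg_cong[where f = det] eq_matI) auto

lemma det_n_mult: "det_n n (\<lambda>r c. \<Sum>s<n. A r s * B s c) = det_n n A * det_n n B"
proof -
  have "mat n n (\<lambda>(r, c). \<Sum>s<n. A r s * B s c) = mat n n (\<lambda>(i, j). A i j) * mat n n (\<lambda>(i, j). B i j)"
    by (rule eq_matI) (auto simp: scalar_prod_def atLeast0LessThan intro!: sum.cong)
  then show ?thesis unfolding det_n_eq_det by (simp add: det_mult[of _ n])
qed

lemma det_n_3: "det_n 3 M =
    M 0 0 * (M 1 1 * M 2 2 - M 1 2 * M 2 1)
  - M 0 1 * (M 1 0 * M 2 2 - M 1 2 * M 2 0)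
  + M 0 2 * (M 1 0 * M 2 1 - M 1 1 * M 2 0)"
proof -
  have laplace: "det A = (\<Sum>j<Suc n. A $$ (n, j) * ((-1) ^ (n + j) * det (mat_delete A n j)))"
    if "A \<in> carrier_mat (Suc n) (Suc n)" for A :: "real mat" and n
    using laplace_expansion_row[OF that, of n] by (simp add: cofactor_def atLeast0LessThan)
  have det1: "det A = A $$ (0, 0)" if "A \<in> carrier_mat 1 1" for A :: "real mat"
    using laplace[of A 0] that by (simp add: mat_delete_def)
  have det2: "det A = A $$ (0, 0) * A $$ (1, 1) - A $$ (0, 1) * A $$ (1, 0)"
    if "A \<in> carrier_mat 2 2" for A :: "real mat"
    using laplace[of A 1] that by (simp add: numeral_2_eq_2 det1 mat_delete_def insert_index_def)
  show ?thesis unfolding det_n_eq_det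
    by (subst laplace[of _ 2]) (auto simp: numeral_3_eq_3 numeral_2_eq_2 det2 mat_delete_def
        insert_index_def algebra_simps)
qed

lemma det_n_transpose: "det_n n (\<lambda>r c. M c r) = det_n n M"
proof -
  have "mat n n (\<lambda>(r, c). M c r) = transpose_mat (mat n n (\<lambda>(i, j). M i j))"
    by (rule eq_matI) auto
  then show ?thesis unfolding det_n_eq_det by (simp add: det_transpose[of _ n])
qed

lemma det_n_6_block:
  assumes "\<And>r c. 3 \<le> r \<Longrightarrow> r < 6 \<Longrightarrow> c < 3 \<Longrightarrow> M r c = 0"
  shows "det_n 6 M = det_n 3 M * det_n 3 (\<lambda>r c. M (r + 3) (c + 3))"
proof -
  have "mat 6 6 (\<lambda>(i, j). M i j) = four_block_mat (mat 3 3 (\<lambda>(i, j). M i j))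
      (mat 3 3 (\<lambda>(i, j). M i (j + 3))) (0\<^sub>m 3 3) (mat 3 3 (\<lambda>(i, j). M (i + 3) (j + 3)))"
    by (rule eq_matI) (auto simp: assms)
  then show ?thesis unfolding det_n_eq_det
    by (simp add: det_four_block_mat_lower_left_zero[of _ 3 _ 3])
qed

lemma det_n_swap_rows:
  assumes "k < n" "l < n" "k \<noteq> l"
  shows "det_n n (\<lambda>r c. M (if r = k then l else if r = l then k else r) c) = - det_n n M"
proof -
  have "mat n n (\<lambda>(r, c). M (if r = k then l else if r = l then k else r) c)
      = swaprows k l (mat n n (\<lambda>(i, j). M i j))"
    by (rule eq_matI) (use assms in auto)
  then show ?thesis unfolding det_n_eq_det using assms by (simp add: det_swaprows[of _ n])
qed

lemma det_n_add_row:
  assumes "k < n" "l < n" "k \<noteq> l"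
  shows "det_n n (\<lambda>r c. if r = k then M k c + a * M l c else M r c) = det_n n M"
proof -
  have "mat n n (\<lambda>(r, c). if r = k then M k c + a * M l c else M r c)
      = addrow a k l (mat n n (\<lambda>(i, j). M i j))"
    by (rule eq_matI) (use assms in auto)
  then show ?thesis unfolding det_n_eq_det using assms by (simp add: det_addrow[of _ n])
qed

lemma det_rot_mat:
  assumes "norm g = 1" shows "det_n 3 (rot_mat g) = 1"
proof -
  have "det_n 3 (rot_mat g) = ((norm g)\<^sup>2) ^ 3"
    unfolding norm_quat_sq det_n_3
    by (cases g) (simp add: rot_mat_def im_coord_def qconj_def qmult_def qcnj_def ebasis_def
        qi_def qj_def qk_def power2_eq_square power3_eq_cube algebra_simps)
  then show ?thesis using assms by simp
qed

section \<open>The derivative of the commutator map\<close>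

definition Dcomm :: "quat \<times> quat \<Rightarrow> quat \<times> quat \<Rightarrow> quat" where
  "Dcomm x h =
     qmult (qmult (fst x) (snd x)) (qmult (qcnj (fst x)) (qcnj (snd h)) + qmult (qcnj (fst h)) (qcnj (snd x)))
   + qmult (qmult (fst x) (snd h) + qmult (fst h) (snd x)) (qmult (qcnj (fst x)) (qcnj (snd x)))"

lemma has_derivative_comm: "(comm has_derivative Dcomm x) (at x)"
proof -
  note product = qmult.FDERIV
  note cnj = bounded_linear.has_derivative[OF bounded_linear_qcnj]
  have fst: "(fst has_derivative fst) (at x)" and snd: "(snd has_derivative snd) (at x)"
    by (auto intro: has_derivative_fst has_derivative_snd has_derivative_ident)
  have "((\<lambda>x. qmult (qmult (fst x) (snd x)) (qmult (qcnj (fst x)) (qcnj (snd x))))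
      has_derivative Dcomm x) (at x)"
    unfolding Dcomm_def by (intro product fst snd cnj)
  then show ?thesis by (simp add: comm_def[abs_def])
qed

lemma frechet_derivative_comm: "frechet_derivative comm (at x) = Dcomm x"
  by (rule frechet_derivative_at[OF has_derivative_comm, symmetric])

lemma Dcomm_qconj2: "norm g = 1 \<Longrightarrow> Dcomm (qconj2 g x) (qconj2 g h) = qconj g (Dcomm x h)"
  by (simp add: Dcomm_def qconj2_def qconj_add qconj_qmult qconj_qcnj)

section \<open>Orientation of a point of V_{1,2} as a determinant condition\<close>

definition frame :: "quat \<times> quat \<Rightarrow> (nat \<Rightarrow> quat \<times> quat) \<Rightarrow> nat \<Rightarrow> quat \<times> quat" where
  "frame x h c = (if c < 3 then fibvec x (ebasis c) else h (c - 3))"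

definition frame_det :: "quat \<times> quat \<Rightarrow> (nat \<Rightarrow> quat \<times> quat) \<Rightarrow> real" where
  "frame_det x h = det_n 6 (\<lambda>r c. Pcoord x (frame x h c) r)"

definition image_det :: "quat \<times> quat \<Rightarrow> (nat \<Rightarrow> quat \<times> quat) \<Rightarrow> real" where
  "image_det x h = det_n 3 (\<lambda>r c. gcoord (- qone) (Dcomm x (h c)) r)"

lemma pos_oriented_pt_iff:
  "pos_oriented_pt x \<longleftrightarrow> (\<forall>h. (\<forall>l<3. h l \<in> TP x) \<longrightarrow> frame_det x h > 0 \<longrightarrow> image_det x h > 0)"
  by (simp add: pos_oriented_pt_def frame_det_def image_det_def frame_def frechet_derivative_comm)

lemma fibvec_linear:
  "fibvec x (p + q) = fibvec x p + fibvec x q" "fibvec x (c *\<^sub>R p) = c *\<^sub>R fibvec x p"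
  by (simp_all add: fibvec_def qmult.add_left qmult.add_right qmult.scaleR_left
      qmult.scaleR_right scaleR_diff_right)

lemma Pcoord_linear:
  "Pcoord x (p + q) l = Pcoord x p l + Pcoord x q l" "Pcoord x (c *\<^sub>R p) l = c * Pcoord x p l"
  by (simp_all add: Pcoord_def gcoord_im_coord qmult.add_right qmult.scaleR_right im_coord_def)

lemma fibvec_qconj2: "norm g = 1 \<Longrightarrow> fibvec (qconj2 g x) \<xi> = qconj2 g (fibvec x (qconj (qcnj g) \<xi>))"
  by (simp add: fibvec_def qconj2_def qconj_diff qconj_qmult qconj_inverse)

text \<open>In the coordinates Pcoord, conjugation by g acts by the block diagonal matrix
  diag(R_g, R_g), where R_g is the rotation matrix of g.\<close>
definition rot_mat2 :: "quat \<Rightarrow> nat \<Rightarrow> nat \<Rightarrow> real" where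
  "rot_mat2 g r s = (if r < 3 then (if s < 3 then rot_mat g r s else 0)
                     else (if s < 3 then 0 else rot_mat g (r - 3) (s - 3)))"

lemma gcoord_qconj:
  "norm g = 1 \<Longrightarrow> gcoord (qconj g a) (qconj g v) l = (\<Sum>k<3. rot_mat g l k * gcoord a v k)"
  by (simp add: gcoord_im_coord qconj_qcnj qconj_qmult[symmetric] im_coord_qconj)

lemma Pcoord_qconj2:
  "norm g = 1 \<Longrightarrow> r < 6 \<Longrightarrow> Pcoord (qconj2 g x) (qconj2 g v) r = (\<Sum>s<6. rot_mat2 g r s * Pcoord x v s)"
  by (simp add: sum_lessThan_6 sum_lessThan_3 rot_mat2_def Pcoord_def qconj2_def gcoord_qconj)

lemma det_rot_mat2: "norm g = 1 \<Longrightarrow> det_n 6 (rot_mat2 g) = 1"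
proof -
  assume g: "norm g = 1"
  have "det_n 6 (rot_mat2 g) = det_n 3 (rot_mat2 g) * det_n 3 (\<lambda>r c. rot_mat2 g (r + 3) (c + 3))"
    by (rule det_n_6_block) (simp add: rot_mat2_def)
  also have "det_n 3 (rot_mat2 g) = det_n 3 (rot_mat g)"
    by (rule det_n_cong) (simp add: rot_mat2_def)
  also have "det_n 3 (\<lambda>r c. rot_mat2 g (r + 3) (c + 3)) = det_n 3 (rot_mat g)"
    by (rule det_n_cong) (simp add: rot_mat2_def)
  finally show ?thesis using g by (simp add: det_rot_mat)
qed

text \<open>The conjugated fibre basis at qconj2 g x is the fibre basis at x transformed by R_g
  transposed; on the remaining three columns the frame is unchanged.\<close>
definition fibre_change :: "quat \<Rightarrow> nat \<Rightarrow> nat \<Rightarrow> real" where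
  "fibre_change g t c = (if t < 3 then (if c < 3 then rot_mat g c t else 0)
                         else (if c < 3 then 0 else if t = c then 1 else 0))"

lemma det_fibre_change: "norm g = 1 \<Longrightarrow> det_n 6 (fibre_change g) = 1"
proof -
  assume g: "norm g = 1"
  have "det_n 6 (fibre_change g) = det_n 3 (fibre_change g) * det_n 3 (\<lambda>r c. fibre_change g (r + 3) (c + 3))"
    by (rule det_n_6_block) (simp add: fibre_change_def)
  also have "det_n 3 (fibre_change g) = det_n 3 (\<lambda>t c. rot_mat g c t)"
    by (rule det_n_cong) (simp add: fibre_change_def)
  also have "\<dots> = 1" using g det_n_transpose[of 3 "rot_mat g"] by (simp add: det_rot_mat)
  also have "det_n 3 (\<lambda>r c. fibre_change g (r + 3) (c + 3)) = 1"
    by (simp add: det_n_3 fibre_change_def)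
  finally show ?thesis by simp
qed

lemma frame_coord_qconj2:
  assumes g: "norm g = 1" and r: "r < 6" and c: "c < 6"
  shows "Pcoord (qconj2 g x) (frame (qconj2 g x) (\<lambda>l. qconj2 g (h l)) c) r
       = (\<Sum>s<6. rot_mat2 g r s * (\<Sum>t<6. Pcoord x (frame x h t) s * fibre_change g t c))"
proof (cases "c < 3")
  case True
  have "Pcoord x (fibvec x (qconj (qcnj g) (ebasis c))) s
      = (\<Sum>t<3. rot_mat g c t * Pcoord x (fibvec x (ebasis t)) s)" for s
    by (simp add: qconj_qcnj_ebasis sum_lessThan_3 fibvec_linear Pcoord_linear)
  then show ?thesis
    using True g r
    by (simp add: frame_def fibvec_qconj2 Pcoord_qconj2 sum_lessThan_6 sum_lessThan_3
        fibre_change_def mult.commute)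
next
  case False
  then have "c = 3 \<or> c = 4 \<or> c = 5" using c by auto
  then show ?thesis
    using g r by (auto simp: frame_def Pcoord_qconj2 sum_lessThan_6 fibre_change_def)
qed

lemma frame_det_qconj2:
  assumes g: "norm g = 1"
  shows "frame_det (qconj2 g x) (\<lambda>l. qconj2 g (h l)) = frame_det x h"
proof -
  define M where "M s t = Pcoord x (frame x h t) s" for s t
  have "frame_det (qconj2 g x) (\<lambda>l. qconj2 g (h l))
      = det_n 6 (\<lambda>r c. \<Sum>s<6. rot_mat2 g r s * (\<Sum>t<6. M s t * fibre_change g t c))"
    unfolding frame_det_def M_def using g by (intro det_n_cong) (simp add: frame_coord_qconj2)
  also have "\<dots> = det_n 6 (rot_mat2 g) * (det_n 6 M * det_n 6 (fibre_change g))"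
    by (simp add: det_n_mult)
  also have "\<dots> = frame_det x h"
    using g by (simp add: det_rot_mat2 det_fibre_change frame_det_def M_def[abs_def])
  finally show ?thesis .
qed

lemma image_det_qconj2:
  assumes g: "norm g = 1"
  shows "image_det (qconj2 g x) (\<lambda>l. qconj2 g (h l)) = image_det x h"
proof -
  have "image_det (qconj2 g x) (\<lambda>l. qconj2 g (h l))
      = det_n 3 (\<lambda>r c. \<Sum>k<3. rot_mat g r k * gcoord (- qone) (Dcomm x (h c)) k)"
    unfolding image_det_def using g
    by (intro det_n_cong) (simp add: Dcomm_qconj2 gcoord_minus_one im_coord_qconj sum_negf[symmetric])
  also have "\<dots> = image_det x h"
    using g by (simp add: det_n_mult det_rot_mat image_det_def)
  finally show ?thesis .
qed

lemma TP_qconj2: "norm g = 1 \<Longrightarrow> qconj2 g v \<in> TP (qconj2 g x) \<longleftrightarrow> v \<in> TP x"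
  by (simp add: TP_def TG_def qconj2_def inner_qconj mem_Times_iff)

lemma pos_oriented_pt_qconj2:
  assumes g: "norm g = 1" and pos: "pos_oriented_pt x"
  shows "pos_oriented_pt (qconj2 g x)"
  unfolding pos_oriented_pt_iff
proof (intro allI impI)
  fix h' assume tan: "\<forall>l<3. h' l \<in> TP (qconj2 g x)" and det: "0 < frame_det (qconj2 g x) h'"
  define h where "h l = qconj2 (qcnj g) (h' l)" for l
  have h': "h' = (\<lambda>l. qconj2 g (h l))"
    using g by (simp add: fun_eq_iff h_def qconj2_def qconj_inverse)
  have "\<forall>l<3. h l \<in> TP x" using tan g by (simp add: h' TP_qconj2)
  moreover have "0 < frame_det x h" using det g by (simp add: h' frame_det_qconj2)
  ultimately have "0 < image_det x h" using pos unfolding pos_oriented_pt_iff by blast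
  then show "0 < image_det (qconj2 g x) h'" using g by (simp add: h' image_det_qconj2)
qed

section \<open>The base point (i, j)\<close>

abbreviation base_pt :: "quat \<times> quat" where "base_pt \<equiv> (qi, qj)"

text \<open>Since ij = k = -ji, [i, j] = -1.\<close>
lemma comm_base_pt: "comm base_pt = - qone"
  by (simp add: comm_def qmult_def qcnj_def qi_def qj_def qone_def)

text \<open>Only \<plusminus>1 commute with both i and j; hence base_pt lies in P_2^*.\<close>
lemma stabiliser_base_pt:
  assumes g: "g \<in> Sp1" and stab: "act base_pt g = base_pt"
  shows "g \<in> {qone, - qone}"
proof -
  have ng: "norm g = 1" using g by (simp add: Sp1_def)
  have commute: "qmult q g = qmult g (qconj g q)" for q using ng by (simp add: qconj_def unit_cancel)
  have "qconj g qi = qi" "qconj g qj = qj" using stab by (simp_all add: act_eq_qconj2 qconj2_def)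
  then have "qmult qi g = qmult g qi" "qmult qj g = qmult g qj" using commute by metis+
  then have im: "Im (fst g) = 0" "snd g = 0"
    by (cases g; auto simp: qmult_def qi_def qj_def complex_eq_iff)+
  then have "(Re (fst g))\<^sup>2 = 1" using norm_quat_sq[of g] ng by simp
  then show ?thesis using im by (cases g) (auto simp: qone_def power2_eq_1_iff complex_eq_iff)
qed

lemma base_pt_P2star: "base_pt \<in> P2star"
  using stabiliser_base_pt by (auto simp: P2star_def P2_def Sp1_def qi_def qj_def norm_Pair)

lemma Dcomm_base_pt:
  assumes "h \<in> TP base_pt"
  shows "gcoord (- qone) (Dcomm base_pt h) 0 = 2 * Pcoord base_pt h 0"
    "gcoord (- qone) (Dcomm base_pt h) 1 = -2 * Pcoord base_pt h 4"
    "gcoord (- qone) (Dcomm base_pt h) 2 = 2 * Pcoord base_pt h 5 - 2 * Pcoord base_pt h 2"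
  using assms
  by (cases h; auto simp: TP_def TG_def inner_prod_def inner_complex_def Dcomm_def gcoord_minus_one
      im_coord_def Pcoord_def gcoord_def qmult_def qcnj_def qi_def qj_def qone_def algebra_simps)+

lemma fibvec_base_pt:
  assumes "r < 6"
  shows "Pcoord base_pt (fibvec base_pt (ebasis c)) r =
    (if c = 0 then (if r = 3 then 2 else 0) else if c = 1 then (if r = 1 then 2 else 0)
     else (if r = 2 \<or> r = 5 then 2 else 0))"
  using assms
  by (auto simp: Pcoord_def gcoord_def fibvec_def ebasis_def qi_def qj_def qk_def qmult_def qcnj_def
      Let_def complex_eq_iff)

text \<open>Both determinants reduce to -8 times the same 3 \<times> 3 minor of the coordinates of h.\<close>
definition base_minor :: "(nat \<Rightarrow> quat \<times> quat) \<Rightarrow> nat \<Rightarrow> nat \<Rightarrow> real" where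
  "base_minor h r c = (if r = 0 then Pcoord base_pt (h c) 0 else if r = 1 then Pcoord base_pt (h c) 4
                       else Pcoord base_pt (h c) 5 - Pcoord base_pt (h c) 2)"

lemma image_det_base_pt:
  assumes tan: "\<forall>l<3. h l \<in> TP base_pt"
  shows "image_det base_pt h = -8 * det_n 3 (base_minor h)"
proof -
  have "image_det base_pt h = det_n 3 (\<lambda>r c. (if r = 1 then -2 else 2) * base_minor h r c)"
    unfolding image_det_def
  proof (rule det_n_cong)
    fix r c :: nat assume "r < 3" "c < 3"
    then have "h c \<in> TP base_pt" "r = 0 \<or> r = 1 \<or> r = 2" using tan by auto
    then show "gcoord (- qone) (Dcomm base_pt (h c)) r = (if r = 1 then -2 else 2) * base_minor h r c"
      using Dcomm_base_pt[of "h c"] by (auto simp: base_minor_def)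
  qed
  then show ?thesis by (simp add: det_n_3 algebra_simps)
qed

lemma frame_det_base_pt: "frame_det base_pt h = -8 * det_n 3 (base_minor h)"
proof -
  define M where "M r c = Pcoord base_pt (frame base_pt h c) r" for r c
  \<comment> \<open>subtract row 2 from row 5, then swap rows 0 and 3: the lower-left block vanishes\<close>
  define M' where "M' r c = (if r = 5 then M 5 c + (-1) * M 2 c else M r c)" for r c
  define S where "S r c = M' (if r = 0 then 3 else if r = 3 then 0 else r) c" for r c
  have "frame_det base_pt h = det_n 6 M'"
    using det_n_add_row[of 5 6 2 M "-1"] by (simp add: frame_det_def M_def[abs_def] M'_def[abs_def])
  also have "\<dots> = - det_n 6 S"
    using det_n_swap_rows[of 0 6 3 M'] by (simp add: S_def[abs_def])
  also have "det_n 6 S = det_n 3 S * det_n 3 (\<lambda>r c. S (r + 3) (c + 3))"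
  proof (rule det_n_6_block)
    fix r c :: nat assume "3 \<le> r" "r < 6" "c < 3"
    then have "r = 3 \<or> r = 4 \<or> r = 5" "c = 0 \<or> c = 1 \<or> c = 2" by auto
    then show "S r c = 0" by (auto simp: S_def M'_def M_def frame_def fibvec_base_pt)
  qed
  also have "det_n 3 S = 8"
    by (simp add: det_n_3 S_def M'_def M_def frame_def fibvec_base_pt)
  also have "det_n 3 (\<lambda>r c. S (r + 3) (c + 3)) = det_n 3 (base_minor h)"
  proof (rule det_n_cong)
    fix r c :: nat assume "r < 3" "c < 3"
    then have "r = 0 \<or> r = 1 \<or> r = 2" by auto
    then show "S (r + 3) (c + 3) = base_minor h r c"
      by (auto simp: S_def M'_def M_def frame_def base_minor_def)
  qed
  finally show ?thesis by simp
qed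

text \<open>Hence at base_pt the frame and its image always have the same sign.\<close>
lemma pos_oriented_base_pt: "pos_oriented_pt base_pt"
  by (simp add: pos_oriented_pt_iff image_det_base_pt frame_det_base_pt)

section \<open>Every solution of [a, b] = -1 is conjugate to the base point\<close>

lemma comm_minus_one_anticommute:
  assumes a: "norm a = 1" and b: "norm b = 1" and c: "comm (a, b) = - qone"
  shows "qmult a b = - qmult b a"
proof -
  have "qmult (comm (a, b)) (qmult b a) = qmult a b"
    using a b by (simp add: comm_def qmult_assoc unit_cancel' unit_qcnj_qmult)
  then show ?thesis using c by (simp add: qmult.minus_left)
qed

text \<open>Anticommuting unit quaternions are purely imaginary and orthogonal: writing out ab = -ba
  in components gives four bilinear equations, from which b_0 = b_0 |a|^2 = 0 and
  a_0 = a_0 |b|^2 = 0 follow by taking suitable combinations.\<close>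
lemma anticommuting_units:
  assumes a: "norm a = 1" and b: "norm b = 1" and anti: "qmult a b = - qmult b a"
  shows "Re (fst a) = 0" "Re (fst b) = 0" "inner a b = 0"
proof -
  obtain A0 A1 A2 A3 where ad: "a = (Complex A0 A1, Complex A2 A3)" by (metis complex.exhaust prod.exhaust)
  obtain B0 B1 B2 B3 where bd: "b = (Complex B0 B1, Complex B2 B3)" by (metis complex.exhaust prod.exhaust)
  have ua: "A0\<^sup>2 + A1\<^sup>2 + A2\<^sup>2 + A3\<^sup>2 = 1" using norm_quat_sq[of a] a by (simp add: ad)
  have ub: "B0\<^sup>2 + B1\<^sup>2 + B2\<^sup>2 + B3\<^sup>2 = 1" using norm_quat_sq[of b] b by (simp add: bd)
  have "fst (qmult a b) = fst (- qmult b a)" "snd (qmult a b) = snd (- qmult b a)"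
    using anti by simp_all
  then have e0: "A0*B0 - A1*B1 - A2*B2 - A3*B3 = 0" and e1: "A0*B1 + B0*A1 = 0"
    and e2: "A0*B2 + B0*A2 = 0" and e3: "A0*B3 + B0*A3 = 0"
    by (simp_all add: ad bd qmult_def complex_eq_iff algebra_simps)
  have "B0 = B0 * (A0\<^sup>2 + A1\<^sup>2 + A2\<^sup>2 + A3\<^sup>2)" using ua by simp
  also have "\<dots> = A0 * (A0*B0 - A1*B1 - A2*B2 - A3*B3) + A1 * (A0*B1 + B0*A1)
            + A2 * (A0*B2 + B0*A2) + A3 * (A0*B3 + B0*A3)"
    by (simp add: power2_eq_square algebra_simps)
  finally have B0: "B0 = 0" using e0 e1 e2 e3 by simp
  have "A0 = A0 * (B0\<^sup>2 + B1\<^sup>2 + B2\<^sup>2 + B3\<^sup>2)" using ub by simp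
  also have "\<dots> = B0 * (A0*B0 - A1*B1 - A2*B2 - A3*B3) + B1 * (A0*B1 + B0*A1)
            + B2 * (A0*B2 + B0*A2) + B3 * (A0*B3 + B0*A3)"
    by (simp add: power2_eq_square algebra_simps)
  finally have A0: "A0 = 0" using e0 e1 e2 e3 by simp
  show "Re (fst a) = 0" "Re (fst b) = 0" "inner a b = 0"
    using A0 B0 e0 by (simp_all add: ad bd inner_prod_def inner_complex_def)
qed

lemma pure_unit_sq: "norm a = 1 \<Longrightarrow> Re (fst a) = 0 \<Longrightarrow> qmult a a = - qone"
  using norm_quat_sq[of a]
  by (cases a) (simp add: qmult_def qone_def complex_eq_iff power2_eq_square algebra_simps)

lemma pure_qcnj: "Re (fst a) = 0 \<Longrightarrow> qcnj a = - a"
  by (cases a) (simp add: qcnj_def complex_eq_iff)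

lemma pure_orthogonal_anticommute:
  "Re (fst a) = 0 \<Longrightarrow> Re (fst b) = 0 \<Longrightarrow> inner a b = 0 \<Longrightarrow> qmult b a = - qmult a b"
  by (cases a; cases b) (simp add: qmult_def inner_prod_def inner_complex_def complex_eq_iff algebra_simps)

text \<open>Averaging trick: if (a, b, c) satisfy the relations of (i, j, k), then
  Q r = r - a r i - b r j - c r k intertwines left multiplication by a, b with right
  multiplication by i, j; and Q r is nonzero for some r in the basis (a trace argument).\<close>
definition intertwiner :: "quat \<Rightarrow> quat \<Rightarrow> quat \<Rightarrow> quat \<Rightarrow> quat" where
  "intertwiner a b c r = r - qmult a (qmult r qi) - qmult b (qmult r qj) - qmult c (qmult r qk)"

lemma intertwiner_trace:
  "Re (fst (intertwiner a b c qone)) + Im (fst (intertwiner a b c qi))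
   + Re (snd (intertwiner a b c qj)) + Im (snd (intertwiner a b c qk)) = 4"
  by (simp add: intertwiner_def qmult_def qi_def qj_def qk_def qone_def algebra_simps)

lemma intertwiner_nonzero: "\<exists>r. intertwiner a b c r \<noteq> 0"
  using intertwiner_trace[of a b c] by (metis add.right_neutral fst_zero snd_zero zero_complex.sel zero_neq_numeral)

lemma intertwiner_intertwines:
  assumes a: "norm a = 1" "Re (fst a) = 0" and b: "norm b = 1" "Re (fst b) = 0"
    and ab: "inner a b = 0" and c: "c = qmult a b"
  shows "qmult a (intertwiner a b c r) = qmult (intertwiner a b c r) qi"
    "qmult b (intertwiner a b c r) = qmult (intertwiner a b c r) qj"
proof -
  have aa: "qmult a a = - qone" using a by (rule pure_unit_sq)
  have bb: "qmult b b = - qone" using b by (rule pure_unit_sq)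
  have ba: "qmult b a = - c" using pure_orthogonal_anticommute[OF a(2) b(2) ab] c by simp
  have a_mult: "qmult a (qmult a x) = - x" "qmult a (qmult b x) = qmult c x"
    "qmult a (qmult c x) = - qmult b x" for x
    using aa c by (simp_all add: qmult_assoc[symmetric] qmult.minus_left)
  have b_mult: "qmult b (qmult a x) = - qmult c x" "qmult b (qmult b x) = - x" for x
    using ba bb by (simp_all add: qmult_assoc[symmetric] qmult.minus_left)
  have b_mult': "qmult b (qmult c x) = qmult a x" for x
  proof -
    have "qmult b (qmult c x) = qmult (qmult b a) (qmult b x)" using c by (simp add: qmult_assoc)
    also have "\<dots> = qmult a x" using ba c b_mult(2) by (simp add: qmult_assoc qmult.minus_left qmult.minus_right)
    finally show ?thesis .
  qed
  show "qmult a (intertwiner a b c r) = qmult (intertwiner a b c r) qi"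
    "qmult b (intertwiner a b c r) = qmult (intertwiner a b c r) qj"
    by (simp_all add: intertwiner_def qmult.add_left qmult.add_right qmult.diff_left qmult.diff_right qmult_assoc a_mult b_mult b_mult'
        qmult.minus_right qmult.minus_left qmult_basis algebra_simps)
qed

text \<open>Skolem-Noether for the pair (i, j): normalising the conjugate of a nonzero intertwiner
  gives a unit g with g\<inverse> i g = a and g\<inverse> j g = b.\<close>
lemma conjugate_to_base_pt:
  assumes y: "y \<in> P2" and cm: "comm y = - qone"
  shows "\<exists>g\<in>Sp1. y = qconj2 g base_pt"
proof -
  obtain a b where y_def: "y = (a, b)" by (cases y)
  have a: "norm a = 1" and b: "norm b = 1" using y by (auto simp: y_def P2_def Sp1_def)
  note pure = anticommuting_units[OF a b comm_minus_one_anticommute[OF a b cm[unfolded y_def]]]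
  define c where "c = qmult a b"
  obtain r where r: "intertwiner a b c r \<noteq> 0" using intertwiner_nonzero by blast
  define q where "q = qcnj (intertwiner a b c r)"
  define g where "g = (1 / norm q) *\<^sub>R q"
  have g: "norm g = 1" using r by (simp add: g_def q_def)
  note intertw = intertwiner_intertwines[OF a pure(1) b pure(2) pure(3) c_def, of r]
  \<comment> \<open>conjugating the intertwining relations: i q = q a and j q = q b\<close>
  have cnj: "qcnj qi = - qi" "qcnj qj = - qj" "qcnj a = - a" "qcnj b = - b"
    using pure by (simp_all add: pure_qcnj qi_def qj_def)
  have "qmult qi q = qmult q a" "qmult qj q = qmult q b"
    using arg_cong[OF intertw(1), of qcnj] arg_cong[OF intertw(2), of qcnj]
    by (simp_all add: q_def qcnj_qmult cnj qmult.minus_left qmult.minus_right)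
  then have "qmult qi g = qmult g a" "qmult qj g = qmult g b"
    by (simp_all add: g_def qmult.scaleR_left qmult.scaleR_right)
  then have "qconj g qi = a" "qconj g qj = b" using g by (simp_all add: qconj_def unit_cancel')
  then have "y = qconj2 g base_pt" by (simp add: y_def qconj2_def)
  then show ?thesis using g by (intro bexI[of _ g]) (simp_all add: Sp1_def)
qed

theorem lemma3p3:
  shows "\<exists>x \<in> P2star. comm x = - qone \<and> V12 = {orbit x} \<and> (\<forall>y \<in> orbit x. pos_oriented_pt y)"
proof (intro bexI conjI)
  show "base_pt \<in> P2star" "comm base_pt = - qone" by (fact base_pt_P2star comm_base_pt)+
  show "V12 = {orbit base_pt}"
  proof (intro equalityI subsetI)
    fix orb assume "orb \<in> V12"
    then obtain x where x: "orb = orbit x" "x \<in> P2star" "comm x = - qone" by (auto simp: V12_def)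
    then obtain g where "g \<in> Sp1" "x = qconj2 g base_pt"
      using conjugate_to_base_pt[of x] by (auto simp: P2star_def)
    then show "orb \<in> {orbit base_pt}" using x(1) by (simp add: orbit_of_qconj2)
  next
    fix orb assume "orb \<in> {orbit base_pt}"
    then show "orb \<in> V12" using base_pt_P2star comm_base_pt unfolding V12_def by blast
  qed
  show "\<forall>y \<in> orbit base_pt. pos_oriented_pt y"
    using pos_oriented_pt_qconj2[OF _ pos_oriented_base_pt] by (auto simp: orbit_qconj2 Sp1_def)
qed

end
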